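(* Let $n\ge1$ and let $F:\mathbb{F}_{2^n}\to\mathbb{F}_{2^n}$ be any function. Then $$2^n\sum_{v_1,v_2\in \mathbb{F}_{2^n}}\ \sum_{\substack{(x_1,x_2,x_3)\in \mathbb{F}_{2^n}^3\\ v_1x_1+v_2x_2+(v_1+v_2)x_3=0}} (-1)^{tr_n(v_1F(x_1)+v_2F(x_2)+(v_1+v_2)F(x_3))}\;-\;\sum_{v_1,v_2\in \mathbb{F}_{2^n}}W_F(0,v_1)W_F(0,v_2)W_F(0,v_1+v_2)$$ $$+\;2^{n+2}\sum_{v\in \mathbb{F}_{2^n}^*}W_F^2(0,v)\;-\;2^{4n+2}\;+\;2^{3n+2}\;\ge\;0,$$ and equality holds if and only if $F$ is an o-polynomial.
   Context: For a positive integer $n$, $tr_n:\mathbb{F}_{2^n}\to\mathbb{F}_2$ denotes the absolute trace $tr_n(x)=x+x^2+\cdots+x^{2^{n-1}}$, and $\mathbb{F}_{2^n}^*=\mathbb{F}_{2^n}\setminus\{0\}$. For $F:\mathbb{F}_{2^n}\to\mathbb{F}_{2^n}$ and $(u,v)\in\mathbb{F}_{2^n}^2$, the Walsh transform is $W_F(u,v)=\sum_{x\in\mathbb{F}_{2^n}}(-1)^{tr_n(vF(x))+tr_n(ux)}$. In the projective plane $PG(2,2^n)$, a hyperoval is a set of $2^n+2$ points no three of which lie on a common line. A function (polynomial) $F$ over $\mathbb{F}_{2^n}$ is an o-polynomial if $\{(1,t,F(t)) : t\in\mathbb{F}_{2^n}\}\cup\{(0,1,0),(0,0,1)\}$ is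 a hyperoval of $PG(2,2^n)$. Equivalently (known fact), for every $a\in\mathbb{F}_{2^n}$ and $b\in\mathbb{F}_{2^n}^*$ the equation $F(x)+bx=a$ has $0$ or $2$ solutions in $\mathbb{F}_{2^n}$. *)

theory Defs
  imports Main "HOL-Library.Cardinality"
begin

text \<open>Finite field setting: a finite field 'a with 1 + 1 = 0 (characteristic 2)
  and CARD('a) = 2^n is (up to isomorphism) F_{2^n}.\<close>

definition tr :: "nat \<Rightarrow> 'a::field \<Rightarrow> 'a" where
  "tr n x = (\<Sum>i<n. x ^ (2 ^ i))"

text \<open>(-1)^{tr_n(y)}, where tr_n(y) \<in> F_2 = {0,1} \<subseteq> 'a.\<close>
definition chi :: "nat \<Rightarrow> 'a::field \<Rightarrow> int" where
  "chi n y = (if tr n y = 0 then 1 else -1)"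

definition walsh :: "nat \<Rightarrow> ('a::{field,finite} \<Rightarrow> 'a) \<Rightarrow> 'a \<Rightarrow> 'a \<Rightarrow> int" where
  "walsh n F u v = (\<Sum>x\<in>UNIV. chi n (v * F x) * chi n (u * x))"

text \<open>Points of PG(2,q) are represented by nonzero triples; two triples represent the
  same point iff proportional. Three points are collinear iff the determinant vanishes.\<close>

definition proportional :: "'a::field \<times> 'a \<times> 'a \<Rightarrow> 'a \<times> 'a \<times> 'a \<Rightarrow> bool" where
  "proportional p q = (\<exists>c. c \<noteq> 0 \<and> q = (c * fst p, c * fst (snd p), c * snd (snd p)))"

definition det3 :: "'a::field \<times> 'a \<times> 'a \<Rightarrow> 'a \<times> 'a \<times> 'a \<Rightarrow> 'a \<times> 'a \<times> 'a \<Rightarrow> 'a" where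
  "det3 p q r = (case p of (a1,a2,a3) \<Rightarrow> case q of (b1,b2,b3) \<Rightarrow> case r of (c1,c2,c3) \<Rightarrow>
      a1 * (b2 * c3 - b3 * c2) - a2 * (b1 * c3 - b3 * c1) + a3 * (b1 * c2 - b2 * c1))"

text \<open>A hyperoval of PG(2,q), q = CARD('a), given by a set S of representatives of
  pairwise distinct points: q+2 points, no three on a common line.\<close>
definition hyperoval :: "('a::{field,finite} \<times> 'a \<times> 'a) set \<Rightarrow> bool" where
  "hyperoval S =
     ((\<forall>p\<in>S. p \<noteq> (0,0,0)) \<and>
      (\<forall>p\<in>S. \<forall>q\<in>S. p \<noteq> q \<longrightarrow> \<not> proportional p q) \<and>
      card S = CARD('a) + 2 \<and>
      (\<forall>p\<in>S. \<forall>q\<in>S. \<forall>r\<in>S. p \<noteq> q \<and> p \<noteq> r \<and> q \<noteq> r \<longrightarrow> det3 p q r \<noteq> 0))"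

definition o_polynomial :: "('a::{field,finite} \<Rightarrow> 'a) \<Rightarrow> bool" where
  "o_polynomial F = hyperoval (range (\<lambda>t. (1, t, F t)) \<union> {(0,1,0), (0,0,1)})"

end

theory Submission
  imports Defs "HOL-Computational_Algebra.Polynomial"
begin

text \<open>Write q = 2^n and m_u(c) for the number of x with F(x) + u x = c, i.e. the number of points
  of the graph of F on the line of slope u and intercept c. Orthogonality of the character
  (-1)^{tr_n} turns every sum in the statement into a count of coincidences: 2^n times the
  constrained sum is q^2 \<Sum>_u \<Sum>_c m_u(c)^3, the Walsh triple sum is q^2 \<Sum>_c m_0(c)^3 and the
  sum of squared Walsh values is q \<Sum>_c m_0(c)^2 - q^2. Since \<Sum>_c m_u(c) = q and
  \<Sum>_u \<Sum>_c m_u(c)^2 = 2q^2 - q, the left-hand side equals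
  q^2 (\<Sum>_{u\<noteq>0} \<Sum>_c m_u(c)(m_u(c)-1)(m_u(c)-2) + \<Sum>_c m_0(c)(m_0(c)-1)),
  a sum of non-negative terms. It vanishes iff F is injective and no line of nonzero slope meets
  the graph of F in three points, which is exactly the hyperoval condition.\<close>

section \<open>Characteristic 2 and the absolute trace\<close>

lemma finite_field_power_card:
  fixes x :: "'a::{field,finite}"
  shows "x ^ CARD('a) = x"
proof (cases "x = 0")
  case False
  let ?U = "UNIV - {0::'a}"
  have "bij_betw ((*) x) ?U ?U"
    by (rule bij_betw_byWitness[where f' = "\<lambda>y. y / x"]) (use False in auto)
  then have "(\<Prod>y\<in>?U. x * y) = (\<Prod>y\<in>?U. y)"
    using prod.reindex_bij_betw[of "(*) x" ?U ?U id] by simp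
  then have "x ^ card ?U = 1"
    by (simp add: prod.distrib)
  moreover have "card ?U = CARD('a) - 1"
    by (simp add: card_Diff_subset)
  ultimately show ?thesis
    by (metis finite_UNIV_card_ge_0 finite power_minus_mult mult_1)
qed simp

lemma char2_add_self:
  fixes x :: "'a::semiring_1"
  assumes "(1::'a) + 1 = 0"
  shows "x + x = 0"
  by (metis assms distrib_right mult_1 mult_zero_left)

lemma char2_add_eq_0_iff:
  fixes a b :: "'a::ring_1"
  assumes "(1::'a) + 1 = 0"
  shows "a + b = 0 \<longleftrightarrow> a = b"
  by (metis add.assoc add.right_neutral add_right_imp_eq char2_add_self[OF assms])

lemma char2_power_2pow_add:
  fixes a b :: "'a::comm_semiring_1"
  assumes "(1::'a) + 1 = 0"
  shows "(a + b) ^ (2 ^ i) = a ^ (2 ^ i) + b ^ (2 ^ i)"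
proof (induction i)
  case (Suc i)
  have square_add: "(c + d) ^ 2 = c ^ 2 + d ^ 2" for c d :: 'a
  proof -
    have "(c + d) ^ 2 = c ^ 2 + d ^ 2 + (c * d + c * d)"
      by (simp add: power2_eq_square algebra_simps)
    then show ?thesis
      by (simp add: char2_add_self[OF assms])
  qed
  have "(a + b) ^ (2 ^ Suc i) = ((a + b) ^ (2 ^ i)) ^ 2"
    by (simp add: power_mult[symmetric] mult.commute)
  also have "\<dots> = a ^ (2 ^ Suc i) + b ^ (2 ^ Suc i)"
    by (simp add: Suc square_add power_mult[symmetric] mult.commute)
  finally show ?case .
qed simp

lemma tr_add:
  fixes a b :: "'a::field"
  assumes "(1::'a) + 1 = 0"
  shows "tr n (a + b) = tr n a + tr n b"
  unfolding tr_def by (simp add: char2_power_2pow_add[OF assms] sum.distrib)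

lemma tr_eq_0_or_1:
  fixes x :: "'a::{field,finite}"
  assumes "(1::'a) + 1 = 0" and "CARD('a) = 2 ^ n"
  shows "tr n x = 0 \<or> tr n x = 1"
proof -
  let ?f = "\<lambda>i. x ^ (2 ^ i)"
  \<comment> \<open>squaring shifts the Frobenius orbit, and x ^ (2 ^ n) = x closes it up\<close>
  have "tr n x ^ 2 = (\<Sum>i<n. ?f (Suc i))"
    unfolding tr_def
    by (induction n) (simp_all add: char2_power_2pow_add[OF assms(1), of _ _ 1, simplified]
                                     power_mult[symmetric] mult.commute)
  also have "\<dots> = tr n x"
    using sum.lessThan_Suc_shift[of ?f n] finite_field_power_card[of x] assms(2)
    by (simp add: tr_def)
  finally have "tr n x * (tr n x - 1) = 0"
    by (simp add: power2_eq_square algebra_simps)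
  then show ?thesis by simp
qed

lemma chi_zero: "chi n (0::'a::field) = 1"
  unfolding chi_def tr_def by (simp add: power_0_left)

lemma chi_add:
  fixes a b :: "'a::{field,finite}"
  assumes "(1::'a) + 1 = 0" and "CARD('a) = 2 ^ n"
  shows "chi n (a + b) = chi n a * chi n b"
  using tr_eq_0_or_1[OF assms, of a] tr_eq_0_or_1[OF assms, of b] tr_add[OF assms(1), of n a b] assms(1)
  unfolding chi_def by auto

lemma ex_tr_nonzero:
  assumes "n \<ge> 1" and "CARD('a::{field,finite}) = 2 ^ n"
  shows "\<exists>y::'a. tr n y \<noteq> 0"
proof (rule ccontr)
  assume all_zero: "\<not> ?thesis"
  define p :: "'a poly" where "p = (\<Sum>i<n. monom 1 (2 ^ i))"
  have roots: "{x. poly p x = 0} = UNIV"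
    using all_zero by (simp add: p_def poly_sum poly_monom tr_def)
  have "coeff p (2 ^ (n - 1)) = (\<Sum>i<n. if i = n - 1 then 1 else 0)"
    by (simp add: p_def coeff_sum coeff_monom)
  then have "p \<noteq> 0"
    using assms(1) by auto
  moreover have "degree p \<le> 2 ^ (n - 1)"
    unfolding p_def by (rule degree_sum_le) (auto simp: degree_monom_eq power_increasing)
  ultimately have "CARD('a) \<le> 2 ^ (n - 1)"
    using card_poly_roots_bound[of p] roots by simp
  moreover have "(2::nat) ^ (n - 1) < 2 ^ n"
    using assms(1) by simp
  ultimately show False
    using assms(2) by linarith
qed

lemma sum_chi_mult:
  fixes a :: "'a::{field,finite}"
  assumes "n \<ge> 1" and "CARD('a) = 2 ^ n" and "(1::'a) + 1 = 0"
  shows "(\<Sum>v\<in>UNIV. chi n (v * a)) = (if a = 0 then int CARD('a) else 0)"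
proof (cases "a = 0")
  case False
  have "bij (\<lambda>v. v * a)"
    by (rule bij_betw_byWitness[where f' = "\<lambda>y. y / a"]) (use False in auto)
  then have "(\<Sum>v\<in>UNIV. chi n (v * a)) = (\<Sum>v\<in>UNIV. chi n (v :: 'a))"
    using sum.reindex_bij_betw[of "\<lambda>v. v * a" UNIV UNIV "chi n"] by simp
  also have "\<dots> = 0"
  proof -
    obtain y :: 'a where "tr n y \<noteq> 0"
      using ex_tr_nonzero[OF assms(1,2)] by blast
    then have chi_y: "chi n y = -1"
      unfolding chi_def by simp
    have "bij (\<lambda>v. v + y)"
      by (rule bij_betw_byWitness[where f' = "\<lambda>w. w - y"]) auto
    then have "(\<Sum>v\<in>UNIV. chi n (v :: 'a)) = (\<Sum>v\<in>UNIV. chi n (v + y))"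
      using sum.reindex_bij_betw[of "\<lambda>v. v + y" UNIV UNIV "chi n"] by simp
    also have "\<dots> = - (\<Sum>v\<in>UNIV. chi n (v :: 'a))"
      by (simp only: chi_add[OF assms(3,2)] chi_y mult_minus1_right sum_negf)
    finally show ?thesis by simp
  qed
  finally show ?thesis
    using False by simp
qed (simp add: chi_zero)

lemma sum_chi_linear2:
  fixes a b :: "'a::{field,finite}"
  assumes "n \<ge> 1" and "CARD('a) = 2 ^ n" and "(1::'a) + 1 = 0"
  shows "(\<Sum>v1\<in>UNIV. \<Sum>v2\<in>UNIV. chi n (v1 * a + v2 * b))
    = (if a = 0 \<and> b = 0 then int CARD('a) ^ 2 else 0)"
  by (simp add: chi_add[OF assms(3,2)] sum_product[symmetric] sum_chi_mult[OF assms] power2_eq_square)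

section \<open>Fibre counts\<close>

lemma sum_swap_2:
  "(\<Sum>a\<in>A. \<Sum>b\<in>B. \<Sum>c\<in>C. f a b c) = (\<Sum>b\<in>B. \<Sum>c\<in>C. \<Sum>a\<in>A. f a b c)"
  by (simp only: sum.swap[of _ A])

lemma sum_swap_3:
  "(\<Sum>a\<in>A. \<Sum>b\<in>B. \<Sum>c\<in>C. \<Sum>d\<in>D. f a b c d) = (\<Sum>b\<in>B. \<Sum>c\<in>C. \<Sum>d\<in>D. \<Sum>a\<in>A. f a b c d)"
  by (simp only: sum.swap[of _ A])

lemma sum_product_3:
  fixes a b c :: "_ \<Rightarrow> 'r::comm_semiring_0"
  shows "sum a A * sum b B * sum c C = (\<Sum>x\<in>A. \<Sum>y\<in>B. \<Sum>z\<in>C. a x * b y * c z)"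
proof -
  have "sum a A * sum b B * sum c C = (\<Sum>x\<in>A. \<Sum>y\<in>B. a x * b y) * sum c C"
    by (simp only: sum_product)
  also have "\<dots> = (\<Sum>x\<in>A. \<Sum>y\<in>B. a x * b y * sum c C)"
    by (simp only: sum_distrib_right)
  also have "\<dots> = (\<Sum>x\<in>A. \<Sum>y\<in>B. \<Sum>z\<in>C. a x * b y * c z)"
    by (simp only: sum_distrib_left)
  finally show ?thesis .
qed

lemma sum_filter_triples:
  fixes g :: "'a::finite \<Rightarrow> 'b::finite \<Rightarrow> 'c::finite \<Rightarrow> 'r::comm_monoid_add"
  shows "(\<Sum>(x, y, z)\<in>{(x, y, z). P x y z}. g x y z)
    = (\<Sum>x\<in>UNIV. \<Sum>y\<in>UNIV. \<Sum>z\<in>UNIV. if P x y z then g x y z else 0)"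
proof -
  have "{(x, y, z). P x y z} = {p \<in> UNIV. case p of (x, y, z) \<Rightarrow> P x y z}"
    by auto
  then show ?thesis
    by (simp add: sum.inter_filter sum.cartesian_product' UNIV_Times_UNIV[symmetric]
             del: UNIV_Times_UNIV cong: if_cong)
qed

definition fiber_card :: "('a::finite \<Rightarrow> 'b) \<Rightarrow> 'b \<Rightarrow> int" where
  "fiber_card G c = int (card {x. G x = c})"

lemma fiber_card_eq_sum: "fiber_card G c = (\<Sum>x\<in>UNIV. if G x = c then 1 else 0)"
  unfolding fiber_card_def by (simp add: sum.If_cases)

lemma fiber_card_nonneg: "fiber_card G c \<ge> 0"
  unfolding fiber_card_def by simp

lemma sum_fiber_card_mult:
  fixes G :: "'a::finite \<Rightarrow> 'b::finite"
  shows "(\<Sum>c\<in>UNIV. fiber_card G c * h c) = (\<Sum>x\<in>UNIV. h (G x))"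
proof -
  have "(if G x = c then 1 else 0) * h c = (if G x = c then h (G x) else 0)" for x c
    by simp
  then show ?thesis
    unfolding fiber_card_eq_sum sum_distrib_right by (subst sum.swap) simp
qed

lemma sum_fiber_card:
  fixes G :: "'a::finite \<Rightarrow> 'b::finite"
  shows "(\<Sum>c\<in>UNIV. fiber_card G c) = int CARD('a)"
  using sum_fiber_card_mult[of G "\<lambda>_. 1"] by simp

lemma sum_fiber_card_power2:
  fixes G :: "'a::finite \<Rightarrow> 'b::finite"
  shows "(\<Sum>c\<in>UNIV. fiber_card G c ^ 2) = (\<Sum>x\<in>UNIV. \<Sum>y\<in>UNIV. if G x = G y then 1 else 0)"
  using sum_fiber_card_mult[of G "fiber_card G"]
  by (simp add: power2_eq_square fiber_card_eq_sum eq_commute)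

lemma sum_fiber_card_power3:
  fixes G :: "'a::finite \<Rightarrow> 'b::finite"
  shows "(\<Sum>c\<in>UNIV. fiber_card G c ^ 3)
    = (\<Sum>x\<in>UNIV. \<Sum>y\<in>UNIV. \<Sum>z\<in>UNIV. if G x = G z \<and> G y = G z then 1 else 0)"
proof -
  have indicator_mult: "(if P then 1 else 0) * (if Q then 1 else 0) = (if P \<and> Q then 1 else (0::int))" for P Q
    by simp
  have "(\<Sum>c\<in>UNIV. fiber_card G c ^ 3) = (\<Sum>z\<in>UNIV. fiber_card G (G z) ^ 2)"
    using sum_fiber_card_mult[of G "\<lambda>c. fiber_card G c ^ 2"] by (simp add: power2_eq_square power3_eq_cube mult.assoc)
  also have "\<dots> = (\<Sum>z\<in>UNIV. \<Sum>x\<in>UNIV. \<Sum>y\<in>UNIV. if G x = G z \<and> G y = G z then 1 else 0)"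
    unfolding fiber_card_eq_sum power2_eq_square sum_product by (simp only: indicator_mult)
  also have "\<dots> = (\<Sum>x\<in>UNIV. \<Sum>y\<in>UNIV. \<Sum>z\<in>UNIV. if G x = G z \<and> G y = G z then 1 else 0)"
    by (rule sum_swap_2)
  finally show ?thesis .
qed

lemma sum_fiber_card_power3_falling:
  fixes G :: "'a::finite \<Rightarrow> 'b::finite"
  shows "(\<Sum>c\<in>UNIV. fiber_card G c ^ 3)
    = (\<Sum>c\<in>UNIV. fiber_card G c * (fiber_card G c - 1) * (fiber_card G c - 2))
      + 3 * (\<Sum>c\<in>UNIV. fiber_card G c ^ 2) - 2 * int CARD('a)"
proof -
  have "fiber_card G c ^ 3
      = fiber_card G c * (fiber_card G c - 1) * (fiber_card G c - 2) + 3 * fiber_card G c ^ 2 - 2 * fiber_card G c" for c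
    by (simp add: power2_eq_square power3_eq_cube algebra_simps)
  then show ?thesis
    by (simp add: sum.distrib sum_subtractf sum_fiber_card flip: sum_distrib_left)
qed

lemma sum_fiber_card_power2_slopes:
  fixes F :: "'a::{field,finite} \<Rightarrow> 'a"
  shows "(\<Sum>u\<in>UNIV. \<Sum>c\<in>UNIV. fiber_card (\<lambda>x. F x + u * x) c ^ 2)
    = 2 * int CARD('a) ^ 2 - int CARD('a)"
proof -
  let ?q = "int CARD('a)"
  \<comment> \<open>two points with distinct abscissae determine exactly one slope\<close>
  have slopes: "(\<Sum>u\<in>UNIV. if F x + u * x = F y + u * y then 1 else 0)
      = 1 + (if x = y then ?q - 1 else 0)" for x y
  proof (cases "x = y")
    case False
    then have "F x + u * x = F y + u * y \<longleftrightarrow> u = (F y - F x) / (x - y)" for u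
      by (auto simp: field_simps)
    then show ?thesis
      using False by simp
  qed simp
  have "(\<Sum>u\<in>UNIV. \<Sum>c\<in>UNIV. fiber_card (\<lambda>x. F x + u * x) c ^ 2)
      = (\<Sum>u\<in>UNIV. \<Sum>x\<in>UNIV. \<Sum>y\<in>UNIV. if F x + u * x = F y + u * y then 1 else 0)"
    by (simp only: sum_fiber_card_power2)
  also have "\<dots> = (\<Sum>x\<in>UNIV. \<Sum>y\<in>UNIV. \<Sum>u\<in>UNIV. if F x + u * x = F y + u * y then 1 else 0)"
    by (rule sum_swap_2)
  also have "\<dots> = (\<Sum>x\<in>(UNIV :: 'a set). ?q + (?q - 1))"
    by (simp add: slopes sum.distrib)
  finally show ?thesis
    by (simp add: power2_eq_square algebra_simps)
qed

lemma int_falling2_nonneg_eq_0_iff: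
  fixes m :: int
  assumes "0 \<le> m"
  shows "0 \<le> m * (m - 1) \<and> (m * (m - 1) = 0 \<longleftrightarrow> m \<le> 1)"
proof (cases "m \<le> 1")
  case True
  with assms have "m = 0 \<or> m = 1" by auto
  then show ?thesis by auto
qed (simp add: zero_less_mult_iff)

lemma int_falling3_nonneg_eq_0_iff:
  fixes m :: int
  assumes "0 \<le> m"
  shows "0 \<le> m * (m - 1) * (m - 2) \<and> (m * (m - 1) * (m - 2) = 0 \<longleftrightarrow> m \<le> 2)"
proof (cases "m \<le> 2")
  case True
  with assms have "m = 0 \<or> m = 1 \<or> m = 2" by auto
  then show ?thesis by auto
qed (simp add: zero_less_mult_iff)

lemma card_le_2_iff:
  assumes "finite A"
  shows "card A \<le> 2 \<longleftrightarrow> \<not> (\<exists>x\<in>A. \<exists>y\<in>A. \<exists>z\<in>A. x \<noteq> y \<and> x \<noteq> z \<and> y \<noteq> z)"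
proof
  assume "card A \<le> 2"
  then show "\<not> (\<exists>x\<in>A. \<exists>y\<in>A. \<exists>z\<in>A. x \<noteq> y \<and> x \<noteq> z \<and> y \<noteq> z)"
    using card_mono[OF assms, of "{_, _, _}"] by fastforce
next
  assume no_three: "\<not> (\<exists>x\<in>A. \<exists>y\<in>A. \<exists>z\<in>A. x \<noteq> y \<and> x \<noteq> z \<and> y \<noteq> z)"
  show "card A \<le> 2"
  proof (rule ccontr)
    assume "\<not> card A \<le> 2"
    then obtain T where "T \<subseteq> A" "card T = 3"
      using obtain_subset_with_card_n[of 3 A] by auto
    then show False
      using no_three by (auto simp: card_3_iff)
  qed
qed

lemma fiber_card_le_1_iff_inj: "(\<forall>c. fiber_card G c \<le> 1) \<longleftrightarrow> inj G"
proof -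
  have "fiber_card G c \<le> 1 \<longleftrightarrow> (\<forall>x\<in>{x. G x = c}. \<forall>y\<in>{x. G x = c}. x = y)" for c
    using card_le_Suc0_iff_eq[of "{x. G x = c}"] by (simp add: fiber_card_def)
  then show ?thesis
    unfolding inj_def by auto
qed

lemma fiber_card_le_2_iff:
  "(\<forall>c. fiber_card G c \<le> 2) \<longleftrightarrow> \<not> (\<exists>x y z. x \<noteq> y \<and> x \<noteq> z \<and> y \<noteq> z \<and> G x = G z \<and> G y = G z)"
proof -
  have "fiber_card G c \<le> 2
      \<longleftrightarrow> \<not> (\<exists>x\<in>{x. G x = c}. \<exists>y\<in>{x. G x = c}. \<exists>z\<in>{x. G x = c}. x \<noteq> y \<and> x \<noteq> z \<and> y \<noteq> z)" for c
    using card_le_2_iff[of "{x. G x = c}"] by (simp add: fiber_card_def)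
  then show ?thesis
    by auto
qed

lemma sum_fiber_card_falling2:
  fixes G :: "'a::finite \<Rightarrow> 'b::finite"
  shows "0 \<le> (\<Sum>c\<in>UNIV. fiber_card G c * (fiber_card G c - 1))
    \<and> ((\<Sum>c\<in>UNIV. fiber_card G c * (fiber_card G c - 1)) = 0 \<longleftrightarrow> inj G)"
  using int_falling2_nonneg_eq_0_iff[OF fiber_card_nonneg, of G]
  by (simp add: sum_nonneg sum_nonneg_eq_0_iff flip: fiber_card_le_1_iff_inj)

lemma sum_fiber_card_falling3:
  fixes G :: "'a::finite \<Rightarrow> 'b::finite"
  shows "0 \<le> (\<Sum>c\<in>UNIV. fiber_card G c * (fiber_card G c - 1) * (fiber_card G c - 2))
    \<and> ((\<Sum>c\<in>UNIV. fiber_card G c * (fiber_card G c - 1) * (fiber_card G c - 2)) = 0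
         \<longleftrightarrow> (\<forall>c. fiber_card G c \<le> 2))"
  using int_falling3_nonneg_eq_0_iff[OF fiber_card_nonneg, of G]
  by (simp add: sum_nonneg sum_nonneg_eq_0_iff)

section \<open>Character sums as fibre counts\<close>

lemma sum_chi_fiber_power2:
  fixes G :: "'b::finite \<Rightarrow> 'a::{field,finite}"
  assumes "n \<ge> 1" and "CARD('a) = 2 ^ n" and "(1::'a) + 1 = 0"
  shows "(\<Sum>v\<in>UNIV. \<Sum>x\<in>UNIV. \<Sum>y\<in>UNIV. chi n (v * (G x + G y)))
    = int CARD('a) * (\<Sum>c\<in>UNIV. fiber_card G c ^ 2)"
proof -
  have "(\<Sum>v\<in>UNIV. \<Sum>x\<in>UNIV. \<Sum>y\<in>UNIV. chi n (v * (G x + G y)))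
      = (\<Sum>x\<in>UNIV. \<Sum>y\<in>UNIV. \<Sum>v\<in>UNIV. chi n (v * (G x + G y)))"
    by (rule sum_swap_2)
  also have "\<dots> = (\<Sum>x\<in>UNIV. \<Sum>y\<in>UNIV. int CARD('a) * (if G x = G y then 1 else 0))"
    by (intro sum.cong refl) (simp add: sum_chi_mult[OF assms] char2_add_eq_0_iff[OF assms(3)])
  finally show ?thesis
    by (simp only: sum_fiber_card_power2 sum_distrib_left)
qed

lemma sum_chi_fiber_power3:
  fixes G :: "'b::finite \<Rightarrow> 'a::{field,finite}"
  assumes "n \<ge> 1" and "CARD('a) = 2 ^ n" and "(1::'a) + 1 = 0"
  shows "(\<Sum>v1\<in>UNIV. \<Sum>v2\<in>UNIV. \<Sum>x\<in>UNIV. \<Sum>y\<in>UNIV. \<Sum>z\<in>UNIV.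
            chi n (v1 * (G x + G z) + v2 * (G y + G z)))
    = int CARD('a) ^ 2 * (\<Sum>c\<in>UNIV. fiber_card G c ^ 3)"
proof -
  let ?f = "\<lambda>v1 v2 x y z. chi n (v1 * (G x + G z) + v2 * (G y + G z))"
  have "(\<Sum>v1\<in>UNIV. \<Sum>v2\<in>UNIV. \<Sum>x\<in>UNIV. \<Sum>y\<in>UNIV. \<Sum>z\<in>UNIV. ?f v1 v2 x y z)
      = (\<Sum>v1\<in>UNIV. \<Sum>x\<in>UNIV. \<Sum>y\<in>UNIV. \<Sum>z\<in>UNIV. \<Sum>v2\<in>UNIV. ?f v1 v2 x y z)"
    by (intro sum.cong refl sum_swap_3)
  also have "\<dots> = (\<Sum>x\<in>UNIV. \<Sum>y\<in>UNIV. \<Sum>z\<in>UNIV. \<Sum>v1\<in>UNIV. \<Sum>v2\<in>UNIV. ?f v1 v2 x y z)"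
    by (rule sum_swap_3)
  also have "\<dots> = (\<Sum>x\<in>UNIV. \<Sum>y\<in>UNIV. \<Sum>z\<in>UNIV.
                      int CARD('a) ^ 2 * (if G x = G z \<and> G y = G z then 1 else 0))"
    by (intro sum.cong refl) (simp add: sum_chi_linear2[OF assms] char2_add_eq_0_iff[OF assms(3)])
  finally show ?thesis
    by (simp only: sum_fiber_card_power3 sum_distrib_left)
qed

lemma walsh_zero_left: "walsh n F 0 v = (\<Sum>x\<in>UNIV. chi n (v * F x))"
  unfolding walsh_def by (simp add: chi_zero)

lemma sum_walsh_triple:
  fixes F :: "'a::{field,finite} \<Rightarrow> 'a"
  assumes "n \<ge> 1" and "CARD('a) = 2 ^ n" and "(1::'a) + 1 = 0"
  shows "(\<Sum>v1\<in>UNIV. \<Sum>v2\<in>UNIV. walsh n F 0 v1 * walsh n F 0 v2 * walsh n F 0 (v1 + v2))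
    = int CARD('a) ^ 2 * (\<Sum>c\<in>UNIV. fiber_card F c ^ 3)"
proof -
  have "walsh n F 0 v1 * walsh n F 0 v2 * walsh n F 0 (v1 + v2)
      = (\<Sum>x\<in>UNIV. \<Sum>y\<in>UNIV. \<Sum>z\<in>UNIV. chi n (v1 * (F x + F z) + v2 * (F y + F z)))" for v1 v2
  proof -
    have "walsh n F 0 v1 * walsh n F 0 v2 * walsh n F 0 (v1 + v2)
        = (\<Sum>x\<in>UNIV. \<Sum>y\<in>UNIV. \<Sum>z\<in>UNIV. chi n (v1 * F x) * chi n (v2 * F y) * chi n ((v1 + v2) * F z))"
      unfolding walsh_zero_left by (rule sum_product_3)
    also have "\<dots> = (\<Sum>x\<in>UNIV. \<Sum>y\<in>UNIV. \<Sum>z\<in>UNIV. chi n (v1 * (F x + F z) + v2 * (F y + F z)))"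
      by (simp add: chi_add[OF assms(3,2)] distrib_left distrib_right mult_ac)
    finally show ?thesis .
  qed
  then show ?thesis
    by (simp add: sum_chi_fiber_power3[OF assms])
qed

lemma sum_walsh_power2_nonzero:
  fixes F :: "'a::{field,finite} \<Rightarrow> 'a"
  assumes "n \<ge> 1" and "CARD('a) = 2 ^ n" and "(1::'a) + 1 = 0"
  shows "(\<Sum>v\<in>UNIV - {0}. walsh n F 0 v ^ 2)
    = int CARD('a) * (\<Sum>c\<in>UNIV. fiber_card F c ^ 2) - int CARD('a) ^ 2"
proof -
  have "walsh n F 0 v ^ 2 = (\<Sum>x\<in>UNIV. \<Sum>y\<in>UNIV. chi n (v * (F x + F y)))" for v
    by (simp add: walsh_zero_left power2_eq_square sum_product chi_add[OF assms(3,2)] distrib_left)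
  then have "(\<Sum>v\<in>UNIV. walsh n F 0 v ^ 2) = int CARD('a) * (\<Sum>c\<in>UNIV. fiber_card F c ^ 2)"
    by (simp add: sum_chi_fiber_power2[OF assms])
  moreover have "walsh n F 0 0 = int CARD('a)"
    by (simp add: walsh_zero_left chi_zero)
  ultimately show ?thesis
    by (simp add: sum_diff1)
qed

lemma sum_constrained_chi:
  fixes F :: "'a::{field,finite} \<Rightarrow> 'a"
  assumes "n \<ge> 1" and "CARD('a) = 2 ^ n" and "(1::'a) + 1 = 0"
  shows "int CARD('a) * (\<Sum>v1\<in>UNIV. \<Sum>v2\<in>UNIV.
             \<Sum>(x1, x2, x3)\<in>{(x1, x2, x3). v1 * x1 + v2 * x2 + (v1 + v2) * x3 = 0}.
               chi n (v1 * F x1 + v2 * F x2 + (v1 + v2) * F x3))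
    = int CARD('a) ^ 2 * (\<Sum>u\<in>UNIV. \<Sum>c\<in>UNIV. fiber_card (\<lambda>x. F x + u * x) c ^ 3)"
proof -
  let ?q = "int CARD('a)"
  let ?f = "\<lambda>u v1 v2 x1 x2 x3. chi n (v1 * ((F x1 + u * x1) + (F x3 + u * x3))
                                     + v2 * ((F x2 + u * x2) + (F x3 + u * x3)))"
  \<comment> \<open>q [L = 0] = \<Sum>_u chi (u L), and the term u L is absorbed by shifting F to F + u id\<close>
  have detect: "?q * (if v1 * x1 + v2 * x2 + (v1 + v2) * x3 = 0
                      then chi n (v1 * F x1 + v2 * F x2 + (v1 + v2) * F x3) else 0)
      = (\<Sum>u\<in>UNIV. ?f u v1 v2 x1 x2 x3)" for v1 v2 x1 x2 x3
  proof -
    have "?f u v1 v2 x1 x2 x3 = chi n (u * (v1 * x1 + v2 * x2 + (v1 + v2) * x3))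
                                 * chi n (v1 * F x1 + v2 * F x2 + (v1 + v2) * F x3)" for u
      by (simp only: chi_add[OF assms(3,2), symmetric]) (simp add: algebra_simps)
    then show ?thesis
      by (simp add: sum_distrib_right[symmetric] sum_chi_mult[OF assms] mult.commute)
  qed
  have "?q * (\<Sum>v1\<in>UNIV. \<Sum>v2\<in>UNIV.
             \<Sum>(x1, x2, x3)\<in>{(x1, x2, x3). v1 * x1 + v2 * x2 + (v1 + v2) * x3 = 0}.
               chi n (v1 * F x1 + v2 * F x2 + (v1 + v2) * F x3))
      = (\<Sum>v1\<in>UNIV. \<Sum>v2\<in>UNIV. \<Sum>x1\<in>UNIV. \<Sum>x2\<in>UNIV. \<Sum>x3\<in>UNIV. \<Sum>u\<in>UNIV.
           ?f u v1 v2 x1 x2 x3)"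
    by (simp only: sum_filter_triples sum_distrib_left detect)
  also have "\<dots> = (\<Sum>v1\<in>UNIV. \<Sum>v2\<in>UNIV. \<Sum>u\<in>UNIV. \<Sum>x1\<in>UNIV. \<Sum>x2\<in>UNIV. \<Sum>x3\<in>UNIV.
           ?f u v1 v2 x1 x2 x3)"
    by (intro sum.cong refl sum_swap_3[symmetric])
  also have "\<dots> = (\<Sum>u\<in>UNIV. \<Sum>v1\<in>UNIV. \<Sum>v2\<in>UNIV. \<Sum>x1\<in>UNIV. \<Sum>x2\<in>UNIV. \<Sum>x3\<in>UNIV.
           ?f u v1 v2 x1 x2 x3)"
    by (rule sum_swap_2[symmetric])
  also have "\<dots> = (\<Sum>u\<in>UNIV. ?q ^ 2 * (\<Sum>c\<in>UNIV. fiber_card (\<lambda>x. F x + u * x) c ^ 3))"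
    by (intro sum.cong refl sum_chi_fiber_power3[OF assms])
  finally show ?thesis
    by (simp only: sum_distrib_left)
qed

section \<open>Hyperovals and fibre counts\<close>

lemma det3_affine:
  "det3 (1, s, a) (1, t, b) (1, w, c) = (t - s) * (c - a) - (w - s) * (b - a)"
  by (simp add: det3_def algebra_simps)

lemma det3_affine_eq_0_iff:
  fixes s t w a b c :: "'a::field"
  assumes "s \<noteq> t"
  shows "det3 (1, s, a) (1, t, b) (1, w, c) = 0 \<longleftrightarrow> (\<exists>u. a + u * s = b + u * t \<and> a + u * s = c + u * w)"
proof
  assume "det3 (1, s, a) (1, t, b) (1, w, c) = 0"
  then have "c - a = (w - s) * (b - a) / (t - s)"
    using assms by (simp add: det3_affine field_simps)
  then show "\<exists>u. a + u * s = b + u * t \<and> a + u * s = c + u * w"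
    using assms by (intro exI[of _ "(b - a) / (s - t)"]) (auto simp: field_simps)
next
  assume "\<exists>u. a + u * s = b + u * t \<and> a + u * s = c + u * w"
  then obtain u where "a + u * s = b + u * t" "a + u * s = c + u * w"
    by blast
  then have "b = a + u * s - u * t" "c = a + u * s - u * w"
    by (simp_all add: eq_diff_eq)
  then show "det3 (1, s, a) (1, t, b) (1, w, c) = 0"
    by (simp add: det3_affine) (simp add: algebra_simps)
qed

lemma o_polynomial_iff_affine:
  fixes F :: "'a::{field,finite} \<Rightarrow> 'a"
  shows "o_polynomial F \<longleftrightarrow> inj F \<and>
    (\<forall>s t w. s \<noteq> t \<and> s \<noteq> w \<and> t \<noteq> w \<longrightarrow> det3 (1, s, F s) (1, t, F t) (1, w, F w) \<noteq> 0)"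
    (is "_ \<longleftrightarrow> inj F \<and> ?affine")
proof -
  let ?S = "range (\<lambda>t. (1::'a, t, F t)) \<union> {(0, 1, 0), (0, 0, 1)}"
  have member: "p \<in> ?S \<longleftrightarrow> (\<exists>t. p = (1, t, F t)) \<or> p = (0, 1, 0) \<or> p = (0, 0, 1)" for p
    by blast
  have no_three: "(\<forall>p\<in>?S. \<forall>q\<in>?S. \<forall>r\<in>?S. p \<noteq> q \<and> p \<noteq> r \<and> q \<noteq> r \<longrightarrow> det3 p q r \<noteq> 0)
      \<longleftrightarrow> inj F \<and> ?affine"
  proof
    assume det: "\<forall>p\<in>?S. \<forall>q\<in>?S. \<forall>r\<in>?S. p \<noteq> q \<and> p \<noteq> r \<and> q \<noteq> r \<longrightarrow> det3 p q r \<noteq> 0"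
    \<comment> \<open>the point (0,1,0) is collinear with any two affine points at the same height\<close>
    have "det3 (1, s, F s) (1, t, F t) (0, 1, 0) \<noteq> 0" if "s \<noteq> t" for s t
      using det that by simp
    then have "inj F"
      by (auto intro!: injI simp: det3_def)
    moreover have ?affine
      using det by simp
    ultimately show "inj F \<and> ?affine" ..
  next
    assume "inj F \<and> ?affine"
    then show "\<forall>p\<in>?S. \<forall>q\<in>?S. \<forall>r\<in>?S. p \<noteq> q \<and> p \<noteq> r \<and> q \<noteq> r \<longrightarrow> det3 p q r \<noteq> 0"
      unfolding member by (auto simp: det3_def inj_eq)
  qed
  have "\<forall>p\<in>?S. p \<noteq> (0, 0, 0)"
    by auto
  moreover have "\<forall>p\<in>?S. \<forall>q\<in>?S. p \<noteq> q \<longrightarrow> \<not> proportional p q"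
    unfolding member proportional_def by auto
  moreover have "card ?S = CARD('a) + 2"
    by (subst card_Un_disjoint) (auto simp: card_image inj_on_def)
  ultimately show ?thesis
    unfolding o_polynomial_def hyperoval_def no_three by blast
qed

lemma o_polynomial_iff_fiber_card:
  fixes F :: "'a::{field,finite} \<Rightarrow> 'a"
  shows "o_polynomial F \<longleftrightarrow> inj F \<and> (\<forall>u. u \<noteq> 0 \<longrightarrow> (\<forall>c. fiber_card (\<lambda>x. F x + u * x) c \<le> 2))"
proof (cases "inj F")
  case True
  \<comment> \<open>injectivity of F rules out the slope 0 for a line through two affine points\<close>
  have collinear: "det3 (1, s, F s) (1, t, F t) (1, w, F w) = 0
      \<longleftrightarrow> (\<exists>u. u \<noteq> 0 \<and> F s + u * s = F t + u * t \<and> F s + u * s = F w + u * w)" if "s \<noteq> t" for s t w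
  proof -
    have "u \<noteq> 0" if "F s + u * s = F t + u * t" for u
      using that True \<open>s \<noteq> t\<close> by (auto simp: inj_eq)
    then show ?thesis
      using det3_affine_eq_0_iff[OF that] by blast
  qed
  show ?thesis
    unfolding o_polynomial_iff_affine fiber_card_le_2_iff using True
    by (auto simp: collinear) metis+
qed (simp add: o_polynomial_iff_affine)

lemma excess_eq_sum_fiber_falling:
  fixes F :: "'a::{field,finite} \<Rightarrow> 'a"
  assumes "n \<ge> 1" and "CARD('a) = 2 ^ n" and "(1::'a) + 1 = 0"
  shows "2 ^ n * (\<Sum>v1\<in>UNIV. \<Sum>v2\<in>UNIV.
                 \<Sum>(x1,x2,x3)\<in>{(x1,x2,x3). v1 * x1 + v2 * x2 + (v1 + v2) * x3 = 0}.
                   chi n (v1 * F x1 + v2 * F x2 + (v1 + v2) * F x3))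
    - (\<Sum>v1\<in>UNIV. \<Sum>v2\<in>UNIV. walsh n F 0 v1 * walsh n F 0 v2 * walsh n F 0 (v1 + v2))
    + 2 ^ (n + 2) * (\<Sum>v\<in>UNIV - {0}. (walsh n F 0 v) ^ 2)
    - 2 ^ (4 * n + 2) + (2::int) ^ (3 * n + 2)
  = 2 ^ (2 * n) *
      ((\<Sum>u\<in>UNIV - {0}. \<Sum>c\<in>UNIV. fiber_card (\<lambda>x. F x + u * x) c
          * (fiber_card (\<lambda>x. F x + u * x) c - 1) * (fiber_card (\<lambda>x. F x + u * x) c - 2))
       + (\<Sum>c\<in>UNIV. fiber_card F c * (fiber_card F c - 1)))"
proof -
  let ?q = "int CARD('a)"
  define C2 where "C2 u = (\<Sum>c\<in>UNIV. fiber_card (\<lambda>x. F x + u * x) c ^ 2)" for u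
  define A where "A u = (\<Sum>c\<in>UNIV. fiber_card (\<lambda>x. F x + u * x) c
          * (fiber_card (\<lambda>x. F x + u * x) c - 1) * (fiber_card (\<lambda>x. F x + u * x) c - 2))" for u
  have shift_0: "(\<lambda>x. F x + 0 * x) = F"
    by simp
  have powers: "(2::int) ^ n = ?q" "(2::int) ^ (2 * n) = ?q ^ 2" "(2::int) ^ (n + 2) = 4 * ?q"
      "(2::int) ^ (4 * n + 2) = 4 * ?q ^ 4" "(2::int) ^ (3 * n + 2) = 4 * ?q ^ 3"
    by (simp_all add: assms(2) power_add power_mult mult.commute)
  have "?q * (\<Sum>v1\<in>UNIV. \<Sum>v2\<in>UNIV.
                 \<Sum>(x1,x2,x3)\<in>{(x1,x2,x3). v1 * x1 + v2 * x2 + (v1 + v2) * x3 = 0}.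
                   chi n (v1 * F x1 + v2 * F x2 + (v1 + v2) * F x3))
      = ?q ^ 2 * (\<Sum>u\<in>UNIV. A u + 3 * C2 u - 2 * ?q)"
    by (simp only: sum_constrained_chi[OF assms] sum_fiber_card_power3_falling A_def C2_def)
  moreover have "(\<Sum>u\<in>UNIV. A u + 3 * C2 u - 2 * ?q) = (\<Sum>u\<in>UNIV. A u) + 3 * (2 * ?q ^ 2 - ?q) - 2 * ?q ^ 2"
    using sum_fiber_card_power2_slopes[of F]
    by (simp add: sum.distrib sum_subtractf power2_eq_square C2_def flip: sum_distrib_left)
  moreover have "(\<Sum>v1\<in>UNIV. \<Sum>v2\<in>UNIV. walsh n F 0 v1 * walsh n F 0 v2 * walsh n F 0 (v1 + v2))
      = ?q ^ 2 * (A 0 + 3 * C2 0 - 2 * ?q)"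
    by (simp add: sum_walsh_triple[OF assms] sum_fiber_card_power3_falling A_def C2_def shift_0)
  moreover have "(\<Sum>v\<in>UNIV - {0}. (walsh n F 0 v) ^ 2) = ?q * C2 0 - ?q ^ 2"
    by (simp add: sum_walsh_power2_nonzero[OF assms] C2_def shift_0)
  moreover have "(\<Sum>c\<in>UNIV. fiber_card F c * (fiber_card F c - 1)) = C2 0 - ?q"
    by (simp add: C2_def shift_0 power2_eq_square algebra_simps sum_subtractf sum_fiber_card)
  moreover have "(\<Sum>u\<in>UNIV - {0}. A u) = (\<Sum>u\<in>UNIV. A u) - A 0"
    by (simp add: sum_diff1)
  ultimately show ?thesis
    unfolding powers A_def[symmetric] by algebra
qed

theorem mainTheorem2:
  fixes F :: "'a::{field,finite} \<Rightarrow> 'a" and n :: nat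
  assumes "n \<ge> 1" and "CARD('a) = 2 ^ n" and "(1::'a) + 1 = 0"
  defines "E \<equiv>
      2 ^ n * (\<Sum>v1\<in>UNIV. \<Sum>v2\<in>UNIV.
                 \<Sum>(x1,x2,x3)\<in>{(x1,x2,x3). v1 * x1 + v2 * x2 + (v1 + v2) * x3 = 0}.
                   chi n (v1 * F x1 + v2 * F x2 + (v1 + v2) * F x3))
    - (\<Sum>v1\<in>UNIV. \<Sum>v2\<in>UNIV. walsh n F 0 v1 * walsh n F 0 v2 * walsh n F 0 (v1 + v2))
    + 2 ^ (n + 2) * (\<Sum>v\<in>UNIV - {0}. (walsh n F 0 v) ^ 2)
    - 2 ^ (4 * n + 2) + (2::int) ^ (3 * n + 2)"
  shows "E \<ge> 0 \<and> (E = 0 \<longleftrightarrow> o_polynomial F)"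
proof -
  let ?m = "\<lambda>u. fiber_card (\<lambda>x. F x + u * x)"
  define P where "P = (\<Sum>u\<in>UNIV - {0}. \<Sum>c\<in>UNIV. ?m u c * (?m u c - 1) * (?m u c - 2))"
  define Q where "Q = (\<Sum>c\<in>UNIV. fiber_card F c * (fiber_card F c - 1))"
  have "E = 2 ^ (2 * n) * (P + Q)"
    unfolding E_def P_def Q_def by (rule excess_eq_sum_fiber_falling[OF assms(1-3)])
  moreover have "0 \<le> P \<and> (P = 0 \<longleftrightarrow> (\<forall>u. u \<noteq> 0 \<longrightarrow> (\<forall>c. ?m u c \<le> 2)))"
    using sum_fiber_card_falling3[of "\<lambda>x. F x + u * x" for u] unfolding P_def
    by (auto simp: sum_nonneg_eq_0_iff intro: sum_nonneg)
  moreover have "0 \<le> Q \<and> (Q = 0 \<longleftrightarrow> inj F)"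
    unfolding Q_def by (rule sum_fiber_card_falling2)
  ultimately show ?thesis
    unfolding o_polynomial_iff_fiber_card by (auto simp: add_nonneg_eq_0_iff)
qed

end
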